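(* Let $m>2\left(\left(2C+\tfrac14\right)^{1/4}+\sqrt2\right)^2$ be an integer and $n=\lceil\log_2(m-3)\rceil$. Then the $m$-gonal form $$P_m(x_1)+2P_m(x_2)+4P_m(x_3)+\cdots+2^{n}P_m(x_{n+1})$$ is universal.
   Context: For an integer $m\ge 3$ and $x\in\mathbb Z$ put $P_m(x)=\frac{m-2}{2}x^2-\frac{m-4}{2}x$. An $m$-gonal form $\sum_i a_iP_m(x_i)$ (positive integer coefficients, integer variables) is universal if for every positive integer $N$ there are integers $x_i$ with $\sum_i a_iP_m(x_i)=N$. Standing assumption: $C$ is a fixed absolute constant such that for every $m\ge3$, every $m$-gonal form that represents every positive integer in $[1,C(m-2)]$ is universal. *)

theory Defs
  imports Complex_Main
begin

text \<open>The m-gonal number P_m(x) = ((m-2)x^2 - (m-4)x)/2; the numerator is always even.\<close>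
definition polyg :: "int \<Rightarrow> int \<Rightarrow> int" where
  "polyg m x = ((m - 2) * x ^ 2 - (m - 4) * x) div 2"

definition represents :: "int \<Rightarrow> int list \<Rightarrow> int \<Rightarrow> bool" where
  "represents m a N \<longleftrightarrow>
     (\<exists>x :: nat \<Rightarrow> int. (\<Sum>i<length a. a ! i * polyg m (x i)) = N)"

definition universal :: "int \<Rightarrow> int list \<Rightarrow> bool" where
  "universal m a \<longleftrightarrow> (\<forall>N::int. N \<ge> 1 \<longrightarrow> represents m a N)"

definition good_const :: "real \<Rightarrow> bool" where
  "good_const C \<longleftrightarrow>
     (\<forall>m::int. \<forall>a::int list. m \<ge> 3 \<longrightarrow> (\<forall>c\<in>set a. c > 0) \<longrightarrow>
        (\<forall>N::int. 1 \<le> N \<and> real_of_int N \<le> C * real_of_int (m - 2) \<longrightarrow> represents m a N) \<longrightarrow>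
        universal m a)"

end

theory Submission
  imports Defs
begin

text \<open>Write \<open>P\<^sub>m(x) = (m - 2) tri x + x\<close> with \<open>tri x = x (x - 1) / 2\<close>. The form with
  coefficients \<open>1, 2, \<dots>, 2\<^sup>k\<close> then takes the value \<open>(m - 2) q + L\<close> for
  \<open>q = \<Sum> 2\<^sup>i tri x\<^sub>i\<close> and \<open>L = \<Sum> 2\<^sup>i x\<^sub>i\<close>. Splitting off \<open>x\<^sub>0\<close> halves both
  \<open>q - tri x\<^sub>0\<close> and \<open>L - x\<^sub>0\<close>, so by induction on \<open>k\<close> (started by a finite computation
  at \<open>k = 4\<close>) every pair in the window \<open>0 \<le> q \<le> W\<close>, \<open>-q \<le> L \<le> W + q\<close> with
  \<open>W = 2 ^ (k + 1) - 1\<close> is attained, apart from a few explicit exceptions near its ends.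
  Larger \<open>q \<le> C\<close> are reached by giving \<open>x\<^sub>0\<close> a large triangular number; the bound on \<open>m\<close>
  ensures that this shrinks the range of attainable \<open>L\<close> by less than \<open>(m - 2) / 2\<close> at
  each end. Writing \<open>N = (m - 2) Q + r\<close>,
  each \<open>N \<le> C (m - 2)\<close> is then attained with \<open>L = r\<close> or \<open>L = r + m - 2\<close>, and the
  defining property of \<open>C\<close> gives universality.\<close>

definition tri :: "int \<Rightarrow> int" where
  "tri x = x * (x - 1) div 2"

lemma two_tri: "2 * tri x = x * (x - 1)"
proof -
  have "even (x * (x - 1))" by auto
  then show ?thesis unfolding tri_def by simp
qed

lemma tri_add_one: "tri (x + 1) = tri x + x"
  using two_tri[of x] two_tri[of "x + 1"] by (simp add: algebra_simps)

lemma tri_one_minus: "tri (1 - x) = tri x"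
  unfolding tri_def by (simp add: algebra_simps)

lemma tri_uminus: "tri (- x) = tri (x + 1)"
  using two_tri[of "- x"] two_tri[of "x + 1"] by (simp add: algebra_simps)

lemma tri_nonneg: "0 \<le> tri x"
proof -
  have "0 \<le> x * (x - 1)"
    by (cases "1 \<le> x") (auto intro: mult_nonneg_nonneg mult_nonpos_nonpos)
  then show ?thesis using two_tri[of x] by simp
qed

lemma tri_mono:
  assumes "0 \<le> a" "a \<le> b"
  shows "tri (a + 1) \<le> tri (b + 1)"
proof -
  have "(a + 1) * a \<le> (b + 1) * b" using assms by (intro mult_mono) auto
  then show ?thesis using two_tri[of "a + 1"] two_tri[of "b + 1"] by simp
qed

lemma tri_bracket:
  assumes "0 \<le> Z"
  shows "\<exists>b\<ge>0. tri (b + 1) \<le> Z \<and> Z < tri (b + 2)"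
proof -
  have "\<exists>b\<ge>0. tri (b + 1) \<le> int z \<and> int z < tri (b + 2)" for z
  proof (induction z)
    case 0
    show ?case by (rule exI[of _ 0]) (simp add: tri_def)
  next
    case (Suc z)
    then obtain b where b: "0 \<le> b" "tri (b + 1) \<le> int z" "int z < tri (b + 2)" by blast
    show ?case
    proof (cases "int (Suc z) < tri (b + 2)")
      case True
      then show ?thesis using b by (intro exI[of _ b]) auto
    next
      case False
      moreover have "tri (b + 3) = tri (b + 2) + (b + 2)"
        using tri_add_one[of "b + 2"] by (simp add: add.assoc)
      ultimately show ?thesis using b by (intro exI[of _ "b + 1"]) (auto simp: add.commute)
    qed
  qed
  from this[of "nat Z"] show ?thesis using assms by simp
qed

lemma polyg_eq_tri: "polyg m x = (m - 2) * tri x + x"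
proof -
  have "(m - 2) * x ^ 2 - (m - 4) * x = 2 * ((m - 2) * tri x + x)"
    using two_tri[of x, symmetric] by (simp add: power2_eq_square algebra_simps)
  then show ?thesis unfolding polyg_def by simp
qed

definition tri_rep :: "nat \<Rightarrow> int \<Rightarrow> int \<Rightarrow> bool" where
  "tri_rep k q L \<longleftrightarrow>
     (\<exists>x::nat \<Rightarrow> int. (\<Sum>i\<le>k. 2 ^ i * tri (x i)) = q \<and> (\<Sum>i\<le>k. 2 ^ i * x i) = L)"

lemma tri_rep_0: "tri_rep 0 (tri L) L"
  unfolding tri_rep_def by (rule exI[of _ "\<lambda>_. L"]) simp

lemma tri_rep_Suc:
  assumes "tri_rep k q L"
  shows "tri_rep (Suc k) (tri y + 2 * q) (y + 2 * L)"
proof -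
  obtain x where x: "(\<Sum>i\<le>k. 2 ^ i * tri (x i)) = q" "(\<Sum>i\<le>k. 2 ^ i * x i) = L"
    using assms unfolding tri_rep_def by blast
  define x' where "x' = (\<lambda>i. if i = 0 then y else x (i - 1))"
  have "(\<Sum>i\<le>Suc k. 2 ^ i * tri (x' i)) = tri y + 2 * q"
    "(\<Sum>i\<le>Suc k. 2 ^ i * x' i) = y + 2 * L"
    unfolding sum.atMost_Suc_shift x'_def x[symmetric]
    by (simp_all add: sum_distrib_left mult.assoc)
  then show ?thesis unfolding tri_rep_def by blast
qed

lemma tri_rep_reflect:
  assumes "tri_rep k q L"
  shows "tri_rep k q (2 ^ Suc k - 1 - L)"
proof -
  obtain x where x: "(\<Sum>i\<le>k. 2 ^ i * tri (x i)) = q" "(\<Sum>i\<le>k. 2 ^ i * x i) = L"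
    using assms unfolding tri_rep_def by blast
  have geom: "(\<Sum>i\<le>k. (2::int) ^ i) = 2 ^ Suc k - 1"
    by (induction k) simp_all
  have "(\<Sum>i\<le>k. 2 ^ i * tri (1 - x i)) = q"
    using x(1) by (simp add: tri_one_minus)
  moreover have "(\<Sum>i\<le>k. 2 ^ i * (1 - x i)) = 2 ^ Suc k - 1 - L"
    using x(2) geom by (simp add: algebra_simps sum_subtractf)
  ultimately show ?thesis unfolding tri_rep_def by (intro exI[of _ "\<lambda>i. 1 - x i"]) simp
qed

lemma represents_of_tri_rep:
  assumes "tri_rep k q L"
  shows "represents m (map (\<lambda>i. 2 ^ i) [0..<k + 1]) ((m - 2) * q + L)"
proof -
  obtain x where x: "(\<Sum>i\<le>k. 2 ^ i * tri (x i)) = q" "(\<Sum>i\<le>k. 2 ^ i * x i) = L"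
    using assms unfolding tri_rep_def by blast
  have "(\<Sum>i<length (map (\<lambda>i. (2::int) ^ i) [0..<k + 1]).
          map (\<lambda>i. 2 ^ i) [0..<k + 1] ! i * polyg m (x i))
      = (\<Sum>i\<le>k. 2 ^ i * ((m - 2) * tri (x i) + x i))"
    by (simp add: lessThan_Suc_atMost[symmetric] polyg_eq_tri nth_append del: upt_Suc)
  also have "\<dots> = (\<Sum>i\<le>k. (m - 2) * (2 ^ i * tri (x i)) + 2 ^ i * x i)"
    by (simp add: algebra_simps)
  also have "\<dots> = (m - 2) * (\<Sum>i\<le>k. 2 ^ i * tri (x i)) + (\<Sum>i\<le>k. 2 ^ i * x i)"
    by (simp only: sum.distrib sum_distrib_left)
  finally show ?thesis unfolding represents_def x by blast
qed

text \<open>The values of \<open>L\<close> near the left end of the window that are missing for \<open>k = 4\<close>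
  (found by exhaustive search); by reflection they reappear at \<open>W - L\<close>.\<close>
definition exceptions :: "int \<Rightarrow> int list" where
  "exceptions q = (if q = 1 then [0] else if q = 2 then [0, 1] else if q = 3 then [-1]
     else if q = 4 then [0, 1, 2, 3] else if q = 5 then [-1] else if q = 6 then [-2]
     else if q = 7 then [-3, 0] else if q = 8 then [0, 4] else if q = 9 then [1]
     else if q = 10 then [-1] else if q = 11 then [0] else if q = 12 then [-4] else [])"

lemma abs_le_4_of_exceptions: "h \<in> set (exceptions q) \<Longrightarrow> \<bar>h\<bar> \<le> 4"
  unfolding exceptions_def by (auto split: if_splits)

lemma exceptions_Nil: "q \<le> 0 \<or> 12 < q \<Longrightarrow> exceptions q = []"
  unfolding exceptions_def by auto

definition exceptional :: "int \<Rightarrow> int \<Rightarrow> int \<Rightarrow> bool" where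
  "exceptional q L W \<longleftrightarrow> L \<in> set (exceptions q) \<or> W - L \<in> set (exceptions q)"

lemma not_exceptional_far: "5 \<le> L \<Longrightarrow> 5 \<le> W - L \<Longrightarrow> \<not> exceptional q L W"
  using abs_le_4_of_exceptions unfolding exceptional_def by fastforce

lemma not_exceptional_large: "12 < q \<Longrightarrow> \<not> exceptional q L W"
  unfolding exceptional_def by (simp add: exceptions_Nil)

definition in_window :: "int \<Rightarrow> int \<Rightarrow> int \<Rightarrow> bool" where
  "in_window W q L \<longleftrightarrow> 0 \<le> q \<and> q \<le> W \<and> - q \<le> L \<and> L \<le> W + q \<and> \<not> exceptional q L W"

definition window_rep :: "nat \<Rightarrow> bool" where
  "window_rep k \<longleftrightarrow> (\<forall>q L. in_window (2 ^ Suc k - 1) q L \<longrightarrow> tri_rep k q L)"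

fun tri_rep_search :: "nat \<Rightarrow> int \<Rightarrow> int \<Rightarrow> bool" where
  "tri_rep_search 0 q L = (tri L = q)"
| "tri_rep_search (Suc k) q L = list_ex (\<lambda>y. tri y \<le> q \<and> even (q - tri y) \<and> even (L - y) \<and>
     tri_rep_search k ((q - tri y) div 2) ((L - y) div 2)) [- q..q + 1]"

lemma tri_rep_of_search: "tri_rep_search k q L \<Longrightarrow> tri_rep k q L"
proof (induction k arbitrary: q L)
  case 0
  then show ?case using tri_rep_0 by auto
next
  case (Suc k)
  then obtain y where y: "even (q - tri y)" "even (L - y)"
    "tri_rep_search k ((q - tri y) div 2) ((L - y) div 2)"
    by (auto simp: list_ex_iff)
  then have "tri_rep (Suc k) (tri y + 2 * ((q - tri y) div 2)) (y + 2 * ((L - y) div 2))"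
    by (intro tri_rep_Suc Suc.IH)
  with y(1,2) show ?case by simp
qed

lemma window_rep_4: "window_rep 4"
proof -
  have "list_all (\<lambda>q. list_all (\<lambda>L. exceptional q L 31 \<or> tri_rep_search 4 q L) [- q..31 + q])
    [0..31]"
    unfolding exceptional_def by code_simp
  then have "exceptional q L 31 \<or> tri_rep_search 4 q L" if "0 \<le> q" "q \<le> 31" "- q \<le> L" "L \<le> 31 + q"
    for q L
    using that by (simp add: list_all_iff)
  then show ?thesis unfolding window_rep_def in_window_def by (auto intro: tri_rep_of_search)
qed

definition digit_step :: "int \<Rightarrow> int \<Rightarrow> int \<Rightarrow> int \<Rightarrow> bool" where
  "digit_step W Q L y \<longleftrightarrow>
     even (Q - tri y) \<and> even (L - y) \<and> in_window W ((Q - tri y) div 2) ((L - y) div 2)"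

lemma digit_step_small:
  assumes "31 \<le> W" "0 \<le> Q" "Q \<le> 28" "- Q \<le> L" "L \<le> 11" "L \<notin> set (exceptions Q)"
  shows "\<exists>y. digit_step W Q L y"
proof -
  have "list_all (\<lambda>Q. list_all (\<lambda>L. L \<in> set (exceptions Q) \<or>
      list_ex (\<lambda>y. tri y \<le> Q \<and> even (Q - tri y) \<and> even (L - y) \<and>
         - ((Q - tri y) div 2) \<le> (L - y) div 2 \<and> (L - y) div 2 \<le> 11 \<and>
         (L - y) div 2 \<notin> set (exceptions ((Q - tri y) div 2))) [-5..6])
    [- Q..11]) [0..28]"
    by code_simp
  moreover have "Q \<in> {0..28}" "L \<in> {- Q..11}" using assms(2-5) by auto
  ultimately obtain y where y: "tri y \<le> Q" "even (Q - tri y)" "even (L - y)"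
    "- ((Q - tri y) div 2) \<le> (L - y) div 2" "(L - y) div 2 \<le> 11"
    "(L - y) div 2 \<notin> set (exceptions ((Q - tri y) div 2))"
    using assms(6) unfolding list_all_iff list_ex_iff set_upto by blast
  have "W - (L - y) div 2 \<notin> set (exceptions ((Q - tri y) div 2))"
    using abs_le_4_of_exceptions y(5) assms(1) by fastforce
  with y tri_nonneg[of y] assms(1,3) show ?thesis
    unfolding digit_step_def in_window_def exceptional_def by auto
qed

lemma parity_digit:
  assumes "0 \<le> Q" "- Q \<le> L" "0 < L \<or> 3 \<le> Q"
  obtains y where "even (Q - tri y)" "even (L - y)" "- 2 \<le> y" "y \<le> 2" "tri y \<le> 3"
    "tri y \<le> Q" "tri y - Q \<le> L - y"
proof -
  have tri_vals: "tri 0 = 0" "tri 1 = 0" "tri (- 1) = 1" "tri 2 = 1" "tri (- 2) = 3"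
    by (simp_all add: tri_def)
  consider "even Q" "even L" | "even Q" "odd L" | "odd Q" "odd L"
    | "odd Q" "even L" "3 - Q \<le> L" | "odd Q" "even L" "L < 3 - Q"
    by linarith
  then show ?thesis
  proof cases
    case 1
    with assms show ?thesis by (intro that[of 0]) (simp_all add: tri_vals)
  next
    case 2
    then have "L \<noteq> - Q" by auto
    with 2 assms show ?thesis by (intro that[of 1]) (simp_all add: tri_vals)
  next
    case 3
    then have "Q \<noteq> 0" by auto
    with 3 assms show ?thesis by (intro that[of "- 1"]) (simp_all add: tri_vals)
  next
    case 4
    then have "Q \<noteq> 0" by auto
    with 4 assms show ?thesis by (intro that[of 2]) (simp_all add: tri_vals)
  next
    case 5
    then have "L = 1 - Q" using assms(2) by (auto elim!: evenE oddE)
    with 5 assms have "3 \<le> Q" by (auto elim!: oddE)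
    with \<open>L = 1 - Q\<close> 5 show ?thesis by (intro that[of "- 2"]) (simp_all add: tri_vals)
  qed
qed

lemma digit_step_generic:
  assumes "31 \<le> W" "0 \<le> Q" "Q \<le> 2 * W + 1" "- Q \<le> L" "L \<le> W" "29 \<le> Q \<or> 12 \<le> L"
  shows "\<exists>y. digit_step W Q L y"
proof -
  have "0 < L \<or> 3 \<le> Q" using assms(6) by auto
  then obtain y where y: "even (Q - tri y)" "even (L - y)" "- 2 \<le> y" "y \<le> 2" "tri y \<le> 3"
    "tri y \<le> Q" "tri y - Q \<le> L - y"
    using parity_digit[OF assms(2,4)] by blast
  obtain q h where q: "Q - tri y = 2 * q" and h: "L - y = 2 * h"
    using y(1,2) by (metis evenE)
  have "\<not> exceptional q h W"
  proof (cases "29 \<le> Q")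
    case True
    then have "12 < q" using q y(5) by linarith
    then show ?thesis by (rule not_exceptional_large)
  next
    case False
    then have "5 \<le> h" "5 \<le> W - h" using assms(1,5,6) h y(3,4) by linarith+
    then show ?thesis by (rule not_exceptional_far)
  qed
  moreover have "0 \<le> q" "q \<le> W" "- q \<le> h" "h \<le> W + q"
    using q h y(3,4,6,7) tri_nonneg[of y] assms(1,3,5) by linarith+
  ultimately have "in_window W q h" unfolding in_window_def by blast
  then have "digit_step W Q L y" using q h y(1,2) unfolding digit_step_def by simp
  then show ?thesis ..
qed

lemma digit_step_exists:
  assumes "31 \<le> W" "0 \<le> Q" "Q \<le> 2 * W + 1" "- Q \<le> L" "L \<le> W"
    "\<not> exceptional Q L (2 * W + 1)"
  shows "\<exists>y. digit_step W Q L y"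
proof (cases "29 \<le> Q \<or> 12 \<le> L")
  case True
  then show ?thesis using assms digit_step_generic by blast
next
  case False
  then show ?thesis using assms digit_step_small unfolding exceptional_def by auto
qed

lemma window_rep_Suc:
  assumes "window_rep k" "4 \<le> k"
  shows "window_rep (Suc k)"
proof -
  define W :: int where "W = 2 ^ Suc k - 1"
  have "(2::int) ^ 5 \<le> 2 ^ Suc k" using assms(2) by (intro power_increasing) auto
  then have W: "31 \<le> W" "2 ^ Suc (Suc k) - 1 = 2 * W + 1" unfolding W_def by simp_all
  have lower_half: "tri_rep (Suc k) Q L"
    if QL: "0 \<le> Q" "Q \<le> 2 * W + 1" "- Q \<le> L" "L \<le> W" "\<not> exceptional Q L (2 * W + 1)"
    for Q L
  proof -
    obtain y where y: "digit_step W Q L y"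
      using digit_step_exists[OF W(1) QL] by blast
    then have "tri_rep k ((Q - tri y) div 2) ((L - y) div 2)"
      using assms(1) unfolding window_rep_def digit_step_def W_def by blast
    then have "tri_rep (Suc k) (tri y + 2 * ((Q - tri y) div 2)) (y + 2 * ((L - y) div 2))"
      by (rule tri_rep_Suc)
    with y show ?thesis unfolding digit_step_def by simp
  qed
  show ?thesis
    unfolding window_rep_def W(2)
  proof (intro allI impI)
    fix Q L
    assume "in_window (2 * W + 1) Q L"
    then have Q: "0 \<le> Q" "Q \<le> 2 * W + 1" "- Q \<le> L" "L \<le> 2 * W + 1 + Q"
      "\<not> exceptional Q L (2 * W + 1)" "\<not> exceptional Q (2 * W + 1 - L) (2 * W + 1)"
      unfolding in_window_def exceptional_def by auto
    show "tri_rep (Suc k) Q L"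
    proof (cases "L \<le> W")
      case True
      with Q show ?thesis by (intro lower_half) auto
    next
      case False
      with Q have "tri_rep (Suc k) Q (2 * W + 1 - L)" by (intro lower_half) auto
      then show ?thesis using tri_rep_reflect W(2) by fastforce
    qed
  qed
qed

lemma window_rep: "4 \<le> k \<Longrightarrow> window_rep k"
proof (induction k rule: nat_induct_at_least)
  case base
  show ?case by (rule window_rep_4)
next
  case (Suc k)
  then show ?case using window_rep_Suc by blast
qed

definition covers :: "nat \<Rightarrow> int \<Rightarrow> int \<Rightarrow> bool" where
  "covers k Q lo \<longleftrightarrow> (\<forall>L. lo \<le> L \<and> L \<le> 2 ^ Suc k - 1 - lo \<longrightarrow> tri_rep k Q L)"

lemma covers_0: "4 \<le> k \<Longrightarrow> covers k 0 0"
  using window_rep unfolding window_rep_def covers_def in_window_def exceptional_def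
  by (auto simp: exceptions_Nil)

lemma covers_small:
  assumes "4 \<le> k" "0 \<le> Q" "Q \<le> 2 ^ Suc k - 1"
  shows "covers k Q 5"
  unfolding covers_def
proof (intro allI impI)
  fix L :: int
  assume "5 \<le> L \<and> L \<le> 2 ^ Suc k - 1 - 5"
  then have "in_window (2 ^ Suc k - 1) Q L"
    using assms(2,3) not_exceptional_far unfolding in_window_def by auto
  then show "tri_rep k Q L" using window_rep[OF assms(1)] unfolding window_rep_def by blast
qed

lemma large_tri_digit:
  assumes b: "2 \<le> b" "tri (b + 1) \<le> Q - 26" "Q - 26 < tri (b + 2)"
  obtains a q where "0 \<le> a" "a \<le> b" "Q - tri (a + 1) = 2 * q" "13 \<le> q" "2 * q \<le> 3 * b + 25"
proof -
  have tri_b: "tri (b + 1) = tri (b - 1) + (2 * b - 1)" "tri (b + 2) = tri (b + 1) + (b + 1)"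
    using tri_add_one[of b] tri_add_one[of "b - 1"] tri_add_one[of "b + 1"]
    by (simp_all add: algebra_simps)
  obtain a where a: "a = b \<or> a = b - 2" "even (Q - tri (a + 1))"
  proof (cases "even (Q - tri (b + 1))")
    case True
    then show ?thesis by (intro that[of b]) auto
  next
    case False
    then show ?thesis using tri_b(1) by (intro that[of "b - 2"]) auto
  qed
  obtain q where q: "Q - tri (a + 1) = 2 * q" using a(2) by (metis evenE)
  have "tri (a + 1) \<le> tri (b + 1)" using a(1) b(1) by (intro tri_mono) auto
  then have "13 \<le> q" using q b(2) by linarith
  moreover have "2 * q \<le> 3 * b + 25"
    using a(1)
  proof
    assume "a = b"
    then show ?thesis using q b(1,3) tri_b(2) by simp
  next
    assume "a = b - 2"
    then show ?thesis using q b(3) tri_b by simp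
  qed
  moreover have "0 \<le> a" "a \<le> b" using a(1) b(1) by auto
  ultimately show ?thesis using q that by blast
qed

text \<open>For large \<open>Q\<close> the lowest variable takes one of the values \<open>-a, a + 1\<close>, whose common
  triangular number \<open>tri (a + 1)\<close> leaves a quotient \<open>q \<ge> 13\<close>, where the window has no
  exceptions.\<close>
lemma covers_large:
  assumes b: "2 \<le> b" "tri (b + 1) \<le> Q - 26" "Q - 26 < tri (b + 2)"
    and k: "3 * b + 27 \<le> 2 ^ Suc k"
  shows "covers k Q (b - 25)"
proof -
  have "(2::int) ^ 5 < 2 ^ Suc k" using k b(1) by simp
  then have "5 < Suc k" by (subst (asm) power_strict_increasing_iff) auto
  then obtain k' where k': "k = Suc k'" "4 \<le> k'" by (cases k) auto
  obtain a q where a: "0 \<le> a" "a \<le> b" and q: "Q - tri (a + 1) = 2 * q" "13 \<le> q"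
    "2 * q \<le> 3 * b + 25"
    using large_tri_digit[OF b] .
  have qW: "q \<le> 2 ^ Suc k' - 1" using q(3) k k' by simp
  show ?thesis
    unfolding covers_def
  proof (intro allI impI)
    fix L
    assume L: "b - 25 \<le> L \<and> L \<le> 2 ^ Suc k - 1 - (b - 25)"
    define y where "y = (if even (L + a) then - a else a + 1)"
    have y: "tri y = tri (a + 1)" "even (L - y)" "y = - a \<or> y = a + 1"
      unfolding y_def by (auto simp: tri_uminus)
    obtain L' where L': "L - y = 2 * L'" using y(2) by (metis evenE)
    have "- q \<le> L'" "L' \<le> 2 ^ Suc k' - 1 + q"
      using L L' y(3) a q(2) k' by auto
    then have "in_window (2 ^ Suc k' - 1) q L'"
      using q(2) qW not_exceptional_large unfolding in_window_def by auto
    then have "tri_rep k' q L'" using window_rep[OF k'(2)] unfolding window_rep_def by blast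
    then have "tri_rep k (tri y + 2 * q) (y + 2 * L')" unfolding k'(1) by (rule tri_rep_Suc)
    moreover have "tri y + 2 * q = Q" "y + 2 * L' = L" using q(1) L' y(1) by simp_all
    ultimately show "tri_rep k Q L" by simp
  qed
qed

text \<open>With \<open>M = m - 2\<close>, a number \<open>M Q + r\<close> with \<open>0 \<le> r < M\<close> is reached either as
  \<open>(Q, r)\<close> or as \<open>(Q - 1, r + M)\<close>; the bounds on \<open>lo\<close> make one of the two fit.\<close>
definition quotient_cover :: "nat \<Rightarrow> int \<Rightarrow> int \<Rightarrow> bool" where
  "quotient_cover k M Q \<longleftrightarrow>
     (\<exists>lo. lo \<le> M \<and> 2 * lo \<le> 2 ^ Suc k - 1 - M \<and> (Q = 0 \<longrightarrow> lo \<le> 0) \<and> covers k Q lo)"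

lemma represents_of_quotient_cover:
  assumes M: "M = m - 2" "M \<le> 2 ^ Suc k - 1" and r: "0 \<le> r" "r < M" and "0 \<le> Q"
    and cover: "quotient_cover k M Q" "0 < Q \<Longrightarrow> quotient_cover k M (Q - 1)"
  shows "represents m (map (\<lambda>i. 2 ^ i) [0..<k + 1]) (M * Q + r)"
proof -
  obtain lo where lo: "lo \<le> M" "2 * lo \<le> 2 ^ Suc k - 1 - M" "Q = 0 \<longrightarrow> lo \<le> 0" "covers k Q lo"
    using cover(1) unfolding quotient_cover_def by blast
  show ?thesis
  proof (cases "lo \<le> r")
    case True
    then have "tri_rep k Q r" using lo(2,4) M(2) r unfolding covers_def by auto
    then show ?thesis using represents_of_tri_rep M(1) by (metis mult.commute)
  next
    case False
    then have "0 < Q" using lo(3) r(1) \<open>0 \<le> Q\<close> by auto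
    then obtain lo' where lo': "lo' \<le> M" "2 * lo' \<le> 2 ^ Suc k - 1 - M" "covers k (Q - 1) lo'"
      using cover(2) unfolding quotient_cover_def by blast
    then have "tri_rep k (Q - 1) (r + M)" using lo(2) False r unfolding covers_def by auto
    then have "represents m (map (\<lambda>i. 2 ^ i) [0..<k + 1]) ((m - 2) * (Q - 1) + (r + M))"
      by (rule represents_of_tri_rep)
    moreover have "(m - 2) * (Q - 1) + (r + M) = M * Q + r" unfolding M(1) by (simp add: algebra_simps)
    ultimately show ?thesis by simp
  qed
qed

lemma quotient_cover:
  assumes k: "4 \<le> k" "M - 1 \<le> 2 ^ k" and "12 \<le> M" "0 \<le> Q"
    and digit: "\<And>b. 0 \<le> b \<Longrightarrow> tri (b + 1) \<le> Q - 26 \<Longrightarrow> 3 * b + 27 \<le> 2 ^ Suc k \<and> 2 * b \<le> M + 47"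
  shows "quotient_cover k M Q"
proof -
  have "(2::int) ^ 5 \<le> 2 ^ Suc k" using k(1) by (intro power_increasing) auto
  then have W: "32 \<le> (2::int) ^ Suc k" "2 * M - 2 \<le> 2 ^ Suc k" using k(2) by simp_all
  consider "Q = 0" | "0 < Q" "Q \<le> 2 ^ Suc k - 1" | "2 ^ Suc k - 1 < Q"
    using \<open>0 \<le> Q\<close> by linarith
  then show ?thesis
  proof cases
    case 1
    then show ?thesis using covers_0[OF k(1)] \<open>12 \<le> M\<close> W unfolding quotient_cover_def
      by (intro exI[of _ 0]) auto
  next
    case 2
    then have "covers k Q 5" using covers_small[OF k(1)] by simp
    then show ?thesis using 2 \<open>12 \<le> M\<close> W unfolding quotient_cover_def
      by (intro exI[of _ 5]) auto
  next
    case 3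
    obtain b where b: "0 \<le> b" "tri (b + 1) \<le> Q - 26" "Q - 26 < tri (b + 2)"
      using tri_bracket[of "Q - 26"] 3 W by auto
    have "2 \<le> b"
    proof (rule ccontr)
      assume "\<not> 2 \<le> b"
      then have "b = 0 \<or> b = 1" using b(1) by auto
      then show False using b(3) 3 W by (auto simp: tri_def)
    qed
    moreover have "3 * b + 27 \<le> 2 ^ Suc k" "2 * b \<le> M + 47" using digit[OF b(1,2)] by auto
    ultimately have "covers k Q (b - 25)" using b covers_large by blast
    then show ?thesis
      using \<open>2 * b \<le> M + 47\<close> \<open>12 \<le> M\<close> W 3 unfolding quotient_cover_def by (intro exI[of _ "b - 25"]) auto
  qed
qed

lemma good_const_ge_1:
  assumes "good_const C"
  shows "1 \<le> C"
proof (rule ccontr)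
  assume "\<not> 1 \<le> C"
  then have "\<forall>N::int. 1 \<le> N \<and> real_of_int N \<le> C * real_of_int (3 - 2) \<longrightarrow> represents 3 [] N"
    by auto
  then have "universal 3 []"
    using assms unfolding good_const_def by auto
  then show False unfolding universal_def represents_def by auto
qed

lemma shifted_square_of_large:
  fixes C :: real and m :: int
  assumes "1 \<le> C" and hm: "real_of_int m > 2 * ((2 * C + 1/4) powr (1/4) + sqrt 2) ^ 2"
  obtains t where "0 < t" "real_of_int m = (t + 2) ^ 2" "8 * C + 1 < t ^ 4"
proof -
  define u where "u = (2 * C + 1/4) powr (1/4)"
  have "u ^ 4 = (2 * C + 1/4) powr (real 4 * (1/4))"
    unfolding u_def using \<open>1 \<le> C\<close> by (subst powr_power) auto
  then have u: "0 \<le> u" "u ^ 4 = 2 * C + 1/4"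
    using \<open>1 \<le> C\<close> by (simp_all add: u_def)
  define s where "s = sqrt (real_of_int m)"
  have "0 < real_of_int m" using hm by (smt (verit) zero_le_power2)
  then have s: "0 \<le> s" "s ^ 2 = real_of_int m" unfolding s_def by simp_all
  have "2 * (u + sqrt 2) ^ 2 = (sqrt 2 * u + 2) ^ 2"
    by (simp add: power2_eq_square algebra_simps)
  then have "(sqrt 2 * u + 2) ^ 2 < s ^ 2" using hm s(2) unfolding u_def by simp
  then have su: "sqrt 2 * u + 2 < s" using s(1) by (rule power_less_imp_less_base)
  have "0 \<le> sqrt 2 * u" using u(1) by simp
  then have "(sqrt 2 * u) ^ 2 < (s - 2) ^ 2" using su by (intro power_strict_mono) auto
  then have "2 * u ^ 2 < (s - 2) ^ 2" by (simp add: power_mult_distrib)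
  then have "(2 * u ^ 2) ^ 2 < ((s - 2) ^ 2) ^ 2" using u(1) by (intro power_strict_mono) auto
  then have "8 * C + 1 < (s - 2) ^ 4" using u(2) by (simp add: power_mult_distrib power_mult[symmetric])
  moreover have "0 < s - 2" using su \<open>0 \<le> sqrt 2 * u\<close> by simp
  ultimately show ?thesis using s(2) by (intro that[of "s - 2"]) simp_all
qed

lemma ge_14_of_shifted_square:
  fixes t :: real
  assumes "0 < t" "real_of_int m = (t + 2) ^ 2" "9 < t ^ 4"
  shows "14 \<le> m"
proof -
  have "3 ^ 2 < (t ^ 2) ^ 2" using assms(3) by (simp add: power_mult[symmetric])
  then have "3 < t ^ 2" by (rule power_less_imp_less_base) simp
  then have "(17 / 10) ^ 2 < t ^ 2" by (simp add: power2_eq_square)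
  then have "17 / 10 < t" by (rule power_less_imp_less_base) (use assms(1) in simp)
  then have "(37 / 10) ^ 2 < (t + 2) ^ 2" by (intro power_strict_mono) auto
  then show ?thesis using assms(2) by (simp add: power2_eq_square)
qed

lemma real_digit_bound:
  fixes t b :: real
  assumes "0 < t" "(2 * b + 1) ^ 2 < t ^ 4" "209 < t ^ 4" "0 \<le> b"
  shows "3 * b + 33 \<le> 2 * (t + 2) ^ 2" "2 * b \<le> (t + 2) ^ 2 + 45"
proof -
  have sq: "(2 * b + 1) ^ 2 < (t ^ 2) ^ 2" "14 ^ 2 < (t ^ 2) ^ 2"
    using assms(2,3) by (simp_all add: power_mult[symmetric])
  have "2 * b + 1 < t ^ 2" "14 < t ^ 2"
    using power_less_imp_less_base[OF sq(1)] power_less_imp_less_base[OF sq(2)] by simp_all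
  moreover have "(37 / 10) ^ 2 < t ^ 2" using \<open>14 < t ^ 2\<close> by (simp add: power2_eq_square)
  then have "37 / 10 < t" by (rule power_less_imp_less_base) (use assms(1) in simp)
  moreover have "(t + 2) ^ 2 = t ^ 2 + 4 * t + 4" by (simp add: power2_eq_square algebra_simps)
  ultimately show "3 * b + 33 \<le> 2 * (t + 2) ^ 2" "2 * b \<le> (t + 2) ^ 2 + 45"
    using assms(4) by linarith+
qed

lemma digit_bound:
  fixes t C :: real
  assumes t: "0 < t" "real_of_int m = (t + 2) ^ 2" "8 * C + 1 < t ^ 4"
    and b: "0 \<le> b" "tri (b + 1) \<le> Q - 26" and "real_of_int Q \<le> C"
  shows "3 * b + 33 \<le> 2 * m \<and> 2 * b \<le> m + 45"
proof -
  have "(2 * b + 1) ^ 2 = 8 * tri (b + 1) + 1"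
    using two_tri[of "b + 1"] by (simp add: power2_eq_square algebra_simps)
  then have "real_of_int ((2 * b + 1) ^ 2) = real_of_int (8 * tri (b + 1) + 1)" by simp
  then have "(2 * real_of_int b + 1) ^ 2 = 8 * real_of_int (tri (b + 1)) + 1" by simp
  moreover have "real_of_int (tri (b + 1)) \<le> C - 26" using b(2) \<open>real_of_int Q \<le> C\<close> by linarith
  moreover have "0 \<le> real_of_int (tri (b + 1))" using tri_nonneg by simp
  ultimately have "3 * real_of_int b + 33 \<le> 2 * (t + 2) ^ 2" "2 * real_of_int b \<le> (t + 2) ^ 2 + 45"
    using real_digit_bound[of t "real_of_int b"] t(1,3) b(1) by auto
  then show ?thesis using t(2) by linarith
qed

lemma ceiling_log2_bounds:
  fixes x :: int
  assumes "8 < x"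
  shows "4 \<le> \<lceil>log 2 (real_of_int x)\<rceil>" "x \<le> 2 ^ nat \<lceil>log 2 (real_of_int x)\<rceil>"
proof -
  have "log 2 8 < log 2 (real_of_int x)" using assms by simp
  moreover have "log 2 (8::real) = 3" using log_pow_cancel[of "2::real" 3] by simp
  ultimately show n4: "4 \<le> \<lceil>log 2 (real_of_int x)\<rceil>" by linarith
  have "real_of_int x = 2 powr log 2 (real_of_int x)" using assms by simp
  also have "\<dots> \<le> 2 powr real_of_int \<lceil>log 2 (real_of_int x)\<rceil>" by (intro powr_mono) auto
  also have "\<dots> = 2 ^ nat \<lceil>log 2 (real_of_int x)\<rceil>" using n4 by (simp add: powr_realpow[symmetric])
  finally show "x \<le> 2 ^ nat \<lceil>log 2 (real_of_int x)\<rceil>"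
    by (metis of_int_le_iff of_int_numeral of_int_power)
qed

lemma quotient_cover_of_le_const:
  fixes C t :: real
  assumes t: "0 < t" "real_of_int m = (t + 2) ^ 2" "8 * C + 1 < t ^ 4"
    and k: "4 \<le> k" "m - 3 \<le> 2 ^ k" and m: "14 \<le> m" and Q: "0 \<le> Q" "real_of_int Q \<le> C"
  shows "quotient_cover k (m - 2) Q"
proof (rule quotient_cover)
  fix b
  assume "0 \<le> b" "tri (b + 1) \<le> Q - 26"
  then have "3 * b + 33 \<le> 2 * m \<and> 2 * b \<le> m + 45" by (rule digit_bound[OF t _ _ Q(2)])
  then show "3 * b + 27 \<le> 2 ^ Suc k \<and> 2 * b \<le> m - 2 + 47" using k(2) by auto
qed (use k m Q(1) in auto)

lemma represents_of_le_const:
  fixes C :: real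
  assumes m: "0 < m - 2" "m - 2 \<le> 2 ^ Suc k - 1"
    and N: "0 \<le> N" "real_of_int N \<le> C * real_of_int (m - 2)"
    and cover: "\<And>Q. 0 \<le> Q \<Longrightarrow> real_of_int Q \<le> C \<Longrightarrow> quotient_cover k (m - 2) Q"
  shows "represents m (map (\<lambda>i. 2 ^ i) [0..<k + 1]) N"
proof -
  define Q r where "Q = N div (m - 2)" and "r = N mod (m - 2)"
  have Qr: "N = (m - 2) * Q + r" and r: "0 \<le> r" "r < m - 2" and "0 \<le> Q"
    using m(1) N(1) unfolding Q_def r_def by (auto simp: pos_imp_zdiv_nonneg_iff)
  have "real_of_int (m - 2) * real_of_int Q \<le> real_of_int (m - 2) * C"
    using N(2) Qr r(1) by (simp add: mult.commute)
  then have "real_of_int Q \<le> C" using m(1) by simp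
  then have "quotient_cover k (m - 2) Q" "0 < Q \<Longrightarrow> quotient_cover k (m - 2) (Q - 1)"
    using cover \<open>0 \<le> Q\<close> by auto
  then show ?thesis
    unfolding Qr using m(2) r \<open>0 \<le> Q\<close> by (intro represents_of_quotient_cover) auto
qed

theorem lemma3p3:
  fixes C :: real and m n :: int
  assumes hC: "good_const C"
    and hm: "real_of_int m > 2 * ((2 * C + 1/4) powr (1/4) + sqrt 2) ^ 2"
    and hn: "n = \<lceil>log 2 (real_of_int (m - 3))\<rceil>"
  shows "universal m (map (\<lambda>i. 2 ^ i) [0..<nat n + 1])"
proof -
  have "1 \<le> C" using hC by (rule good_const_ge_1)
  then obtain t where t: "0 < t" "real_of_int m = (t + 2) ^ 2" "8 * C + 1 < t ^ 4"
    using hm by (rule shifted_square_of_large)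
  have "14 \<le> m" using t \<open>1 \<le> C\<close> by (intro ge_14_of_shifted_square[of t]) auto
  define k where "k = nat n"
  have "8 < m - 3" using \<open>14 \<le> m\<close> by simp
  from ceiling_log2_bounds[OF this] have k: "4 \<le> k" "m - 3 \<le> 2 ^ k"
    unfolding hn[symmetric] k_def by simp_all
  have "(2::int) ^ 4 \<le> 2 ^ k" using k(1) by (rule power_increasing) simp
  then have "m - 2 \<le> 2 ^ Suc k - 1" using k(2) by simp
  then have "represents m (map (\<lambda>i. 2 ^ i) [0..<k + 1]) N"
    if "1 \<le> N" "real_of_int N \<le> C * real_of_int (m - 2)" for N
    using that \<open>14 \<le> m\<close> quotient_cover_of_le_const[OF t k \<open>14 \<le> m\<close>]
    by (intro represents_of_le_const) auto
  then show ?thesis using hC \<open>14 \<le> m\<close> unfolding good_const_def k_def by auto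
qed

end
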